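(* Let $f$ be a real quadratic form on $\mathbb R^n$. Then (1) at least one of the sets $\mathrm{St}(f)$ and $\widetilde C(f)$ is empty; (2) at least one of the sets $C(f)$ and $\widetilde{\mathrm{St}}(f)$ is empty.
   Context: $H_n=\{x\in\mathbb R^n:\sum x_i=0\}$. $C^-(f)=\{h\in H_n\setminus\{0\}: \partial f/\partial x_i(h)\le0\ \forall i\}$, $C^+(f)$ likewise with $\ge0$, $C(f)=C^+(f)\cup C^-(f)$. $\widetilde C(f)=\{v\in C(f):\ (\partial f/\partial x_1(v),\dots,\partial f/\partial x_n(v))\ne 0\}$. $\mathrm{St}(f)=\{a\in\mathbb R^n: a_i>0\ \forall i,\ \partial f/\partial x_i(a)=\partial f/\partial x_j(a)\ \forall i,j\}$. $P_n=\{x:x_i>0,\ \sum x_i=1\}$, $\overline P_n=\{x: x_i\ge0,\ \sum x_i=1\}$. A vector $u\in P_n$ is $P$-faithful for $f$ if $f(u)>0$ and $f(u)\le f(w)$ for all $w\in\overline P_n$, with $f(u)<f(w)$ whenever $w\in\overline P_n\setminus P_n$; $\widetilde{\mathrm{St}}(f)$ is the set of $P$-faithful vectors. *)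

theory Defs
  imports "HOL-Analysis.Analysis"
begin

definition quadratic_form :: "(real^'n \<Rightarrow> real) \<Rightarrow> bool" where
  "quadratic_form f \<longleftrightarrow> (\<exists>A :: real^'n^'n. \<forall>x. f x = (\<Sum>i\<in>UNIV. \<Sum>j\<in>UNIV. A$i$j * x$i * x$j))"

definition pd :: "(real^'n \<Rightarrow> real) \<Rightarrow> 'n \<Rightarrow> real^'n \<Rightarrow> real" where
  "pd f i x = deriv (\<lambda>t. f (x + t *\<^sub>R axis i 1)) 0"

definition Hn :: "(real^'n) set" where
  "Hn = {x. (\<Sum>i\<in>UNIV. x$i) = 0}"

definition Cminus :: "(real^'n \<Rightarrow> real) \<Rightarrow> (real^'n) set" where
  "Cminus f = {h \<in> Hn - {0}. \<forall>i. pd f i h \<le> 0}"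

definition Cplus :: "(real^'n \<Rightarrow> real) \<Rightarrow> (real^'n) set" where
  "Cplus f = {h \<in> Hn - {0}. \<forall>i. pd f i h \<ge> 0}"

definition Cset :: "(real^'n \<Rightarrow> real) \<Rightarrow> (real^'n) set" where
  "Cset f = Cplus f \<union> Cminus f"

definition Ctilde :: "(real^'n \<Rightarrow> real) \<Rightarrow> (real^'n) set" where
  "Ctilde f = {v \<in> Cset f. (\<chi> i. pd f i v) \<noteq> 0}"

definition St :: "(real^'n \<Rightarrow> real) \<Rightarrow> (real^'n) set" where
  "St f = {a. (\<forall>i. a$i > 0) \<and> (\<forall>i j. pd f i a = pd f j a)}"

definition Pn :: "(real^'n) set" where
  "Pn = {x. (\<forall>i. x$i > 0) \<and> (\<Sum>i\<in>UNIV. x$i) = 1}"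

definition Pbar :: "(real^'n) set" where
  "Pbar = {x. (\<forall>i. x$i \<ge> 0) \<and> (\<Sum>i\<in>UNIV. x$i) = 1}"

definition P_faithful :: "(real^'n \<Rightarrow> real) \<Rightarrow> real^'n \<Rightarrow> bool" where
  "P_faithful f u \<longleftrightarrow> u \<in> Pn \<and> f u > 0 \<and> (\<forall>w\<in>Pbar. f u \<le> f w)
     \<and> (\<forall>w\<in>Pbar - Pn. f u < f w)"

definition St_tilde :: "(real^'n \<Rightarrow> real) \<Rightarrow> (real^'n) set" where
  "St_tilde f = {u. P_faithful f u}"

end

theory Submission
  imports Defs
begin

(* Write f x = x \<bullet> (B *v x) / 2 with B symmetric: the gradient of f at x is B x and
   h \<bullet> (B x) = x \<bullet> (B h).
   (1) If B a is a constant vector, a > 0 and v has coordinate sum 0, then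
   a \<bullet> (B v) = v \<bullet> (B a) = 0; a one-signed vector orthogonal to a positive one vanishes,
   so B v = 0.
   (2) If u is P-faithful and h lies in C(f), then t \<mapsto> f (u + t h) has a local minimum
   at 0, so u \<bullet> (B h) = h \<bullet> (B u) = 0. Hence B h = 0 and f h = 0, so f is constant on
   the line u + t h. That line leaves the open simplex, where f must be strictly larger. *)

lemma quadratic_form_eq_inner_matrix:
  fixes f :: "real^'n \<Rightarrow> real"
  assumes "quadratic_form f"
  obtains A :: "real^'n^'n" where "\<And>x. f x = x \<bullet> (A *v x)"
proof -
  obtain A :: "real^'n^'n" where "\<And>x. f x = (\<Sum>i\<in>UNIV. \<Sum>j\<in>UNIV. A$i$j * x$i * x$j)"
    using assms unfolding quadratic_form_def by blast
  then have "\<And>x. f x = x \<bullet> (A *v x)"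
    by (simp add: inner_vec_def matrix_vector_mult_def sum_distrib_left ac_simps)
  then show thesis using that by blast
qed

lemma transpose_add: "transpose (A + B) = transpose A + transpose (B :: 'a::plus^'n^'m)"
  by (simp add: transpose_def vec_eq_iff)

lemma inner_matrix_vector_transpose: "x \<bullet> (A *v y) = (transpose A *v x) \<bullet> (y :: real^'n)"
  by (simp add: dot_lmul_matrix)

lemma quadratic_form_symmetric_matrix:
  fixes f :: "real^'n \<Rightarrow> real"
  assumes "quadratic_form f"
  obtains B :: "real^'n^'n" where "transpose B = B" and "\<And>x. f x = x \<bullet> (B *v x) / 2"
proof -
  obtain A :: "real^'n^'n" where A: "\<And>x. f x = x \<bullet> (A *v x)"
    using quadratic_form_eq_inner_matrix[OF assms] by blast
  have "transpose (A + transpose A) = A + transpose A"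
    by (simp add: transpose_add add.commute)
  moreover have "f x = x \<bullet> ((A + transpose A) *v x) / 2" for x
    using inner_matrix_vector_transpose[of x "transpose A" x]
    by (simp add: A matrix_vector_mult_add_rdistrib inner_add_right inner_commute)
  ultimately show thesis using that by blast
qed

lemma inner_one_signed_eq_0:
  fixes a g :: "real^'n"
  assumes a: "\<forall>i. 0 < a$i" and g: "(\<forall>i. 0 \<le> g$i) \<or> (\<forall>i. g$i \<le> 0)" and "a \<bullet> g = 0"
  shows "g = 0"
proof -
  have nonneg: "g' = 0" if "\<forall>i. 0 \<le> g'$i" "a \<bullet> g' = 0" for g' :: "real^'n"
  proof -
    have "\<forall>i\<in>UNIV. a$i * g'$i = 0"
      using that a by (subst sum_nonneg_eq_0_iff[symmetric]) (auto simp: inner_vec_def less_imp_le)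
    then have "g'$i = 0" for i using a[rule_format, of i] by (metis UNIV_I mult_eq_0_iff less_irrefl)
    then show "g' = 0" by (simp add: vec_eq_iff)
  qed
  from g show ?thesis
  proof
    assume "\<forall>i. g$i \<le> 0"
    then show ?thesis using nonneg[of "- g"] \<open>a \<bullet> g = 0\<close> by simp
  qed (use nonneg \<open>a \<bullet> g = 0\<close> in blast)
qed

lemma sum_eq_0_negative_component:
  fixes h :: "real^'n"
  assumes "(\<Sum>i\<in>UNIV. h$i) = 0" and "h \<noteq> 0"
  obtains k where "h$k < 0"
proof -
  have "\<not> (\<forall>i. 0 \<le> h$i)"
  proof
    assume "\<forall>i. 0 \<le> h$i"
    then have "\<forall>i\<in>UNIV. h$i = 0" using assms(1) by (simp add: sum_nonneg_eq_0_iff)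
    with assms(2) show False by (simp add: vec_eq_iff)
  qed
  then show thesis using that by (auto simp: not_le)
qed

lemma positive_ray_reaches_orthant_boundary:
  fixes u h :: "real^'n"
  assumes u: "\<forall>i. 0 < u$i" and "h$k < 0"
  obtains T j where "0 < T" and "(u + T *\<^sub>R h)$j = 0"
    and "\<And>t i. 0 \<le> t \<Longrightarrow> t \<le> T \<Longrightarrow> 0 \<le> (u + t *\<^sub>R h)$i"
proof -
  define S where "S = {i. h$i < 0}"
  define T where "T = Min ((\<lambda>i. u$i / - h$i) ` S)"
  have "S \<noteq> {}" using \<open>h$k < 0\<close> by (auto simp: S_def)
  then have "T \<in> (\<lambda>i. u$i / - h$i) ` S" unfolding T_def by (intro Min_in) auto
  then obtain j where j: "h$j < 0" "T = u$j / - h$j" by (auto simp: S_def)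
  have T_le: "T * - h$i \<le> u$i" if "h$i < 0" for i
  proof -
    have "T \<le> u$i / - h$i" unfolding T_def using that by (intro Min_le) (auto simp: S_def)
    then show ?thesis using that pos_le_divide_eq[of "- h$i" T "u$i"] by simp
  qed
  have "0 < T" using j u by (simp add: divide_pos_neg)
  moreover have "(u + T *\<^sub>R h)$j = 0" using j by simp
  moreover have "0 \<le> (u + t *\<^sub>R h)$i" if "0 \<le> t" "t \<le> T" for t i
  proof (cases "h$i < 0")
    case True
    then have "t * - h$i \<le> T * - h$i" using that by (intro mult_right_mono) auto
    then show ?thesis using T_le[OF True] by simp
  next
    case False
    then show ?thesis using that u by (simp add: add_pos_nonneg less_imp_le)
  qed
  ultimately show thesis using that by blast
qed

lemma Pn_ray_reaches_boundary:
  assumes u: "u \<in> Pn" and h: "h \<in> Hn - {0}"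
  obtains T where "0 < T" and "u + T *\<^sub>R h \<in> Pbar - Pn"
    and "\<And>t. 0 \<le> t \<Longrightarrow> t \<le> T \<Longrightarrow> u + t *\<^sub>R h \<in> Pbar"
proof -
  have u_pos: "\<forall>i. 0 < u$i" using u by (simp add: Pn_def)
  obtain k where "h$k < 0" using h by (auto simp: Hn_def intro: sum_eq_0_negative_component)
  then obtain T j where T: "0 < T" "(u + T *\<^sub>R h)$j = 0"
    and nonneg: "\<And>t i. 0 \<le> t \<Longrightarrow> t \<le> T \<Longrightarrow> 0 \<le> (u + t *\<^sub>R h)$i"
    using positive_ray_reaches_orthant_boundary[OF u_pos] by blast
  have sum: "(\<Sum>i\<in>UNIV. (u + t *\<^sub>R h)$i) = 1" for t
    using u h by (simp add: Pn_def Hn_def sum.distrib flip: sum_distrib_left)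
  have "u + t *\<^sub>R h \<in> Pbar" if "0 \<le> t" "t \<le> T" for t
    using nonneg[OF that] sum by (simp add: Pbar_def)
  moreover have "u + T *\<^sub>R h \<notin> Pn"
    using T(2) unfolding Pn_def by (metis (mono_tags) less_irrefl mem_Collect_eq)
  ultimately show thesis using that T(1) by auto
qed

locale symmetric_quadratic_form =
  fixes B :: "real^'n^'n" and f :: "real^'n \<Rightarrow> real"
  assumes symmetric: "transpose B = B"
    and f_eq: "f x = x \<bullet> (B *v x) / 2"
begin

lemma inner_B_commute: "h \<bullet> (B *v x) = x \<bullet> (B *v h)"
  using inner_matrix_vector_transpose[of h B x] by (simp add: symmetric inner_commute)

lemma f_along_line: "f (x + t *\<^sub>R h) = f x + t * (h \<bullet> (B *v x)) + t\<^sup>2 * f h"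
  using inner_B_commute[of h x]
  by (simp add: f_eq algebra_simps inner_add_left inner_add_right power2_eq_square add_divide_distrib)

lemma has_real_derivative_f_along_line:
  "((\<lambda>t. f (x + t *\<^sub>R h)) has_real_derivative h \<bullet> (B *v x)) (at 0)"
  unfolding f_along_line by (auto intro!: derivative_eq_intros)

lemma pd_f: "pd f i x = (B *v x) $ i"
  unfolding pd_def using has_real_derivative_f_along_line[of x "axis i 1"]
  by (simp add: DERIV_imp_deriv inner_axis')

lemma St_or_Ctilde_empty: "St f = {} \<or> Ctilde f = {}"
proof (rule ccontr)
  assume "\<not> ?thesis"
  then obtain a v where a: "a \<in> St f" and v: "v \<in> Ctilde f" by blast
  have a_pos: "\<forall>i. 0 < a$i" and "\<forall>i j. (B *v a)$i = (B *v a)$j"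
    using a by (auto simp: St_def pd_f)
  then obtain c where B_a: "\<And>i. (B *v a)$i = c" by metis
  have v_sum: "(\<Sum>i\<in>UNIV. v$i) = 0" and v_sign: "(\<forall>i. 0 \<le> (B *v v)$i) \<or> (\<forall>i. (B *v v)$i \<le> 0)"
    and v_ne: "B *v v \<noteq> 0"
    using v by (auto simp: Ctilde_def Cset_def Cplus_def Cminus_def Hn_def pd_f)
  have "a \<bullet> (B *v v) = v \<bullet> (B *v a)"
    by (rule inner_B_commute)
  also have "\<dots> = (\<Sum>i\<in>UNIV. v$i) * c"
    by (simp add: inner_vec_def B_a sum_distrib_right)
  also have "\<dots> = 0"
    using v_sum by simp
  finally have "B *v v = 0"
    using a_pos v_sign by (intro inner_one_signed_eq_0)
  with v_ne show False ..
qed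

lemma Cset_or_St_tilde_empty: "Cset f = {} \<or> St_tilde f = {}"
proof (rule ccontr)
  assume "\<not> ?thesis"
  then obtain h u where h: "h \<in> Cset f" and u: "u \<in> St_tilde f" by blast
  have h_dir: "h \<in> Hn - {0}" "- h \<in> Hn - {0}"
    using h by (auto simp: Cset_def Cplus_def Cminus_def Hn_def sum_negf)
  have u_Pn: "u \<in> Pn" and u_min: "\<And>w. w \<in> Pbar \<Longrightarrow> f u \<le> f w"
    and u_strict: "\<And>w. w \<in> Pbar - Pn \<Longrightarrow> f u < f w"
    using u by (auto simp: St_tilde_def P_faithful_def)
  obtain T1 where T1: "0 < T1" "u + T1 *\<^sub>R h \<in> Pbar - Pn"
    and fwd: "\<And>t. 0 \<le> t \<Longrightarrow> t \<le> T1 \<Longrightarrow> u + t *\<^sub>R h \<in> Pbar"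
    using Pn_ray_reaches_boundary[OF u_Pn h_dir(1)] by blast
  obtain T2 where "0 < T2" and bwd: "\<And>t. 0 \<le> t \<Longrightarrow> t \<le> T2 \<Longrightarrow> u + t *\<^sub>R - h \<in> Pbar"
    using Pn_ray_reaches_boundary[OF u_Pn h_dir(2)] by blast
  have "u + y *\<^sub>R h \<in> Pbar" if "\<bar>y\<bar> < min T1 T2" for y
  proof (cases "0 \<le> y")
    case True
    then show ?thesis using that fwd by simp
  next
    case False
    then show ?thesis using that bwd[of "- y"] by simp
  qed
  then have "h \<bullet> (B *v u) = 0"
    using \<open>0 < T1\<close> \<open>0 < T2\<close> u_min
    by (intro DERIV_local_min[OF has_real_derivative_f_along_line, of "min T1 T2"]) auto
  then have "u \<bullet> (B *v h) = 0" by (simp add: inner_B_commute)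
  then have "B *v h = 0"
    using u_Pn h by (intro inner_one_signed_eq_0) (auto simp: Pn_def Cset_def Cplus_def Cminus_def pd_f)
  then have "f (u + T1 *\<^sub>R h) = f u"
    using \<open>h \<bullet> (B *v u) = 0\<close> by (simp add: f_along_line f_eq[of h])
  with u_strict[OF T1(2)] show False by simp
qed

end

theorem proposition1:
  fixes f :: "real^'n \<Rightarrow> real"
  assumes "quadratic_form f"
  shows "(St f = {} \<or> Ctilde f = {}) \<and> (Cset f = {} \<or> St_tilde f = {})"
proof -
  obtain B :: "real^'n^'n" where "transpose B = B" and "\<And>x. f x = x \<bullet> (B *v x) / 2"
    using quadratic_form_symmetric_matrix[OF assms] by blast
  then interpret symmetric_quadratic_form B f
    by unfold_locales
  show ?thesis
    using St_or_Ctilde_empty Cset_or_St_tilde_empty by blast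
qed

end
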